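(* Assume the setting in the context. Let $x_i,x_j,x_k\in X$ be distinct, and assume $x_k$ is neither a parent of $x_i$ nor a parent of $x_j$. If there exist $G_1,G_2\in\mathcal G$, $M\subseteq X\setminus\{x_i,x_j,x_k\}$ and $N\subseteq X\setminus\{x_i,x_j\}$ with $x_i-G_1(M\cup\{x_k\})\perp\!\!\!\perp x_j-G_2(N)$, then there exist $G_1',G_2'\in\mathcal G$, $M'\subseteq X\setminus\{x_i,x_j,x_k\}$ and $N'\subseteq X\setminus\{x_i,x_j\}$ with $x_i-G_1'(M')\perp\!\!\!\perp x_j-G_2'(N')$.
   Context: Model: $X$ is a finite set of observed random variables and $U$ a finite set of unobserved random variables; $V=X\cup U$ and $G=(V,E)$ is a DAG on $V$. Each $v_i\in V$ satisfies $v_i=\sum_{x_j\in \mathrm{pa}(v_i)\cap X} f^{(i)}_j(x_j)+\sum_{u_k\in\mathrm{pa}(v_i)\cap U} f^{(i)}_k(u_k)+n_i$, where the $f$'s are nonlinear functions and the external noises $n_i$ are jointly independent. "Parent", "ancestor", "path", "d-separation" refer to $G$ (a path has distinct vertices). Causal Faithfulness Condition (CFC): any conditional independence among variables of $V$ that is not entailed by d-separation in $G$ does not hold. $\perp\!\!\!\perp$ denotes statistical independence, $\not\perp\!\!\!\perp$ dependence. Function class: $\mathcal G$ is a class of generalized additive functions: for $G\in\mathcal G$ and a set $M$ of observed variables, $G(M)=\sum_{x_m\in M} g_m(x_m)$ (with $G(\emptyset)=0$). It satisfies: for any $x_i,x_j\in X$, sets $M,N\subseteq X$, $G_1,G_2\in\mathcal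 G$ and external noise $n_k$, if $n_k\not\perp\!\!\!\perp x_i-G_1(M)$ and $n_k\not\perp\!\!\!\perp x_j-G_2(N)$ then $x_i-G_1(M)\not\perp\!\!\!\perp x_j-G_2(N)$. Definitions, for $X'\subseteq X$ and $x_i,x_j\in X'$: an unobserved causal path (UCP) from $x_i$ to $x_j$ w.r.t. $X'$ is a directed path $x_i\to\cdots\to v_k\to x_j$ in $G$ with $v_k\notin X'$; an unobserved backdoor path (UBP) between $x_i$ and $x_j$ w.r.t. $X'$ is a path $x_i\leftarrow v_k\leftarrow\cdots\leftarrow v\to\cdots\to v_l\to x_j$ with $v_k,v_l\notin X'$ (allowing $v=v_k$, $v=v_l$, or $v=v_k=v_l$; $v$ may be in $X'$). "UBP/UCP between $x_i$ and $x_j$" means a UBP or a UCP in either direction. $x_j$ is a visible parent of $x_i$ w.r.t. $X'$ if $x_j$ is a parent of $x_i$ and there is no UBP/UCP between them w.r.t. $X'$; $(x_i,x_j)$ is a visible non-edge w.r.t. $X'$ if there is no edge between them and no UBP/UCP between them w.r.t. $X'$; $(x_i,x_j)$ is invisible w.r.t. $X'$ if there is a UBP/UCP between them w.r.t. $X'$. When $X'$ is omitted, $X'=X$. Standing facts (taken as known), for $X'\subseteq X$ and distinct $x_i,x_j\in X'$: (F1) $x_j$ is a visible parent of $x_i$ w.r.t. $X'$ iff [for all $G_1,G_2\in\mathcal G$, $M\subseteq X'\setminus\{x_i,x_j\}$, $N\subseteq X'\setminus\{x_j\}$: $x_i-G_1(M)\not\perp\!\!\!\perp x_j-G_2(N)$]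 and [there exist $G_1,G_2\in\mathcal G$, $M\subseteq X'\setminus\{x_i\}$, $N\subseteq X'\setminus\{x_i,x_j\}$ with $x_i-G_1(M)\perp\!\!\!\perp x_j-G_2(N)$]. (F2) $(x_i,x_j)$ is a visible non-edge w.r.t. $X'$ iff there exist $G_1,G_2\in\mathcal G$ and $M,N\subseteq X'\setminus\{x_i,x_j\}$ with $x_i-G_1(M)\perp\!\!\!\perp x_j-G_2(N)$. (F3) $(x_i,x_j)$ is invisible w.r.t. $X'$ iff for all $M\subseteq X'\setminus\{x_i\}$, $N\subseteq X'\setminus\{x_j\}$, $G_1,G_2\in\mathcal G$: $x_i-G_1(M)\not\perp\!\!\!\perp x_j-G_2(N)$. *)

theory Defs
  imports "HOL-Probability.Probability"
begin

definition parents :: "('v \<times> 'v) set \<Rightarrow> 'v \<Rightarrow> 'v set" where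
  "parents E v = {u. (u, v) \<in> E}"

definition is_path :: "('v \<times> 'v) set \<Rightarrow> 'v list \<Rightarrow> bool" where
  "is_path E p \<longleftrightarrow> p \<noteq> [] \<and> distinct p \<and>
     (\<forall>t. Suc t < length p \<longrightarrow> (p ! t, p ! Suc t) \<in> E \<or> (p ! Suc t, p ! t) \<in> E)"

definition is_dipath :: "('v \<times> 'v) set \<Rightarrow> 'v list \<Rightarrow> bool" where
  "is_dipath E p \<longleftrightarrow> p \<noteq> [] \<and> distinct p \<and>
     (\<forall>t. Suc t < length p \<longrightarrow> (p ! t, p ! Suc t) \<in> E)"

definition descendants :: "('v \<times> 'v) set \<Rightarrow> 'v \<Rightarrow> 'v set" where
  "descendants E w = {d. (w, d) \<in> E\<^sup>*}"

definition collider_at :: "('v \<times> 'v) set \<Rightarrow> 'v list \<Rightarrow> nat \<Rightarrow> bool" where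
  "collider_at E p t \<longleftrightarrow> (p ! (t - 1), p ! t) \<in> E \<and> (p ! Suc t, p ! t) \<in> E"

definition blocked :: "('v \<times> 'v) set \<Rightarrow> 'v set \<Rightarrow> 'v list \<Rightarrow> bool" where
  "blocked E C p \<longleftrightarrow> (\<exists>t. 0 < t \<and> Suc t < length p \<and>
     ((\<not> collider_at E p t \<and> p ! t \<in> C) \<or>
      (collider_at E p t \<and> descendants E (p ! t) \<inter> C = {})))"

definition d_separated :: "('v \<times> 'v) set \<Rightarrow> 'v set \<Rightarrow> 'v set \<Rightarrow> 'v set \<Rightarrow> bool" where
  "d_separated E A B C \<longleftrightarrow> (\<forall>a\<in>A. \<forall>b\<in>B. \<forall>p. is_path E p \<and> hd p = a \<and> last p = b
      \<longrightarrow> blocked E C p)"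

definition UCP :: "('v \<times> 'v) set \<Rightarrow> 'v set \<Rightarrow> 'v \<Rightarrow> 'v \<Rightarrow> bool" where
  "UCP E X' xi xj \<longleftrightarrow> (\<exists>p. is_dipath E p \<and> hd p = xi \<and> last p = xj \<and> 2 \<le> length p \<and>
      p ! (length p - 2) \<notin> X')"

text \<open>UBP between xi and xj w.r.t. X': xi <- vk <- ... <- v -> ... -> vl -> xj,
  vk, vl not in X'; given by two directed paths p1 (v to xi) and p2 (v to xj)
  sharing only their start v, so that the combined path has distinct vertices.\<close>
definition UBP :: "('v \<times> 'v) set \<Rightarrow> 'v set \<Rightarrow> 'v \<Rightarrow> 'v \<Rightarrow> bool" where
  "UBP E X' xi xj \<longleftrightarrow> (\<exists>p1 p2. is_dipath E p1 \<and> is_dipath E p2 \<and> hd p1 = hd p2 \<and>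
      last p1 = xi \<and> last p2 = xj \<and> 2 \<le> length p1 \<and> 2 \<le> length p2 \<and>
      distinct (rev p1 @ tl p2) \<and>
      p1 ! (length p1 - 2) \<notin> X' \<and> p2 ! (length p2 - 2) \<notin> X')"

definition invisible :: "('v \<times> 'v) set \<Rightarrow> 'v set \<Rightarrow> 'v \<Rightarrow> 'v \<Rightarrow> bool" where
  "invisible E X' xi xj \<longleftrightarrow> UBP E X' xi xj \<or> UCP E X' xi xj \<or> UCP E X' xj xi"

definition visible_parent :: "('v \<times> 'v) set \<Rightarrow> 'v set \<Rightarrow> 'v \<Rightarrow> 'v \<Rightarrow> bool" where
  "visible_parent E X' xi xj \<longleftrightarrow> xj \<in> parents E xi \<and> \<not> invisible E X' xi xj"

definition visible_nonedge :: "('v \<times> 'v) set \<Rightarrow> 'v set \<Rightarrow> 'v \<Rightarrow> 'v \<Rightarrow> bool" where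
  "visible_nonedge E X' xi xj \<longleftrightarrow> (xi, xj) \<notin> E \<and> (xj, xi) \<notin> E \<and> \<not> invisible E X' xi xj"

definition indep :: "'a measure \<Rightarrow> ('a \<Rightarrow> real) \<Rightarrow> ('a \<Rightarrow> real) \<Rightarrow> bool" where
  "indep P Y Z \<longleftrightarrow> prob_space.indep_var P borel Y borel Z"

definition gen_sigma :: "'a measure \<Rightarrow> ('v \<Rightarrow> 'a \<Rightarrow> real) \<Rightarrow> 'v set \<Rightarrow> 'a measure" where
  "gen_sigma P var C = vimage_algebra (space P) (\<lambda>\<omega>. restrict (\<lambda>v. var v \<omega>) C) (PiM C (\<lambda>_. borel))"

definition cond_indep :: "'a measure \<Rightarrow> ('v \<Rightarrow> 'a \<Rightarrow> real) \<Rightarrow> 'v set \<Rightarrow> 'v set \<Rightarrow> 'v set \<Rightarrow> bool" where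
  "cond_indep P var A B C \<longleftrightarrow>
    (\<forall>a \<in> sets (gen_sigma P var A). \<forall>b \<in> sets (gen_sigma P var B).
      AE \<omega> in P. real_cond_exp P (gen_sigma P var C) (indicator (a \<inter> b)) \<omega> =
        real_cond_exp P (gen_sigma P var C) (indicator a) \<omega> *
        real_cond_exp P (gen_sigma P var C) (indicator b) \<omega>)"

definition Gadd :: "('v \<Rightarrow> real \<Rightarrow> real) \<Rightarrow> ('v \<Rightarrow> 'a \<Rightarrow> real) \<Rightarrow> 'v set \<Rightarrow> 'a \<Rightarrow> real" where
  "Gadd g var M = (\<lambda>\<omega>. \<Sum>m\<in>M. g m (var m \<omega>))"

definition resid :: "('v \<Rightarrow> 'a \<Rightarrow> real) \<Rightarrow> 'v \<Rightarrow> ('v \<Rightarrow> real \<Rightarrow> real) \<Rightarrow> 'v set \<Rightarrow> 'a \<Rightarrow> real" where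
  "resid var x g M = (\<lambda>\<omega>. var x \<omega> - Gadd g var M \<omega>)"

definition nonlinear :: "(real \<Rightarrow> real) \<Rightarrow> bool" where
  "nonlinear h \<longleftrightarrow> \<not> (\<exists>a b. \<forall>t. h t = a * t + b)"

text \<open>Additive nonlinear causal model over the DAG (X \<union> U, E) with jointly independent
  external noises n; f v u is the function of parent u in the equation of v.\<close>
definition additive_model ::
  "'a measure \<Rightarrow> 'v set \<Rightarrow> 'v set \<Rightarrow> ('v \<times> 'v) set \<Rightarrow> ('v \<Rightarrow> 'a \<Rightarrow> real)
   \<Rightarrow> ('v \<Rightarrow> 'a \<Rightarrow> real) \<Rightarrow> ('v \<Rightarrow> 'v \<Rightarrow> real \<Rightarrow> real) \<Rightarrow> bool" where
  "additive_model P X U E var n f \<longleftrightarrow>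
     prob_space P \<and> finite X \<and> finite U \<and> X \<inter> U = {} \<and>
     E \<subseteq> (X \<union> U) \<times> (X \<union> U) \<and> acyclic E \<and>
     (\<forall>v \<in> X \<union> U. var v \<in> borel_measurable P) \<and>
     (\<forall>v \<in> X \<union> U. \<forall>u \<in> parents E v. nonlinear (f v u)) \<and>
     (\<forall>v \<in> X \<union> U. \<forall>\<omega> \<in> space P.
        var v \<omega> = (\<Sum>u \<in> parents E v \<inter> X. f v u (var u \<omega>))
                  + (\<Sum>u \<in> parents E v \<inter> U. f v u (var u \<omega>)) + n v \<omega>) \<and>
     prob_space.indep_vars P (\<lambda>_. borel) n (X \<union> U)"

definition faithful :: "'a measure \<Rightarrow> 'v set \<Rightarrow> ('v \<times> 'v) set \<Rightarrow> ('v \<Rightarrow> 'a \<Rightarrow> real) \<Rightarrow> bool" where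
  "faithful P V E var \<longleftrightarrow>
     (\<forall>A B C. A \<subseteq> V \<and> B \<subseteq> V \<and> C \<subseteq> V \<and> A \<noteq> {} \<and> B \<noteq> {} \<and>
        A \<inter> B = {} \<and> A \<inter> C = {} \<and> B \<inter> C = {} \<and> cond_indep P var A B C
        \<longrightarrow> d_separated E A B C)"

definition class_property ::
  "'a measure \<Rightarrow> 'v set \<Rightarrow> 'v set \<Rightarrow> ('v \<Rightarrow> 'a \<Rightarrow> real) \<Rightarrow> ('v \<Rightarrow> 'a \<Rightarrow> real)
   \<Rightarrow> ('v \<Rightarrow> real \<Rightarrow> real) set \<Rightarrow> bool" where
  "class_property P X V var n \<G> \<longleftrightarrow>
     (\<forall>xi \<in> X. \<forall>xj \<in> X. \<forall>M N. M \<subseteq> X \<longrightarrow> N \<subseteq> X \<longrightarrow>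
       (\<forall>G1 \<in> \<G>. \<forall>G2 \<in> \<G>. \<forall>k \<in> V.
          \<not> indep P (n k) (resid var xi G1 M) \<and> \<not> indep P (n k) (resid var xj G2 N)
          \<longrightarrow> \<not> indep P (resid var xi G1 M) (resid var xj G2 N)))"

end

theory Submission
  imports Defs
begin

(* The independence hypothesis excludes, via F3 and F1, both an invisible pair and an edge
   in either direction, so (xi, xj) is a visible non-edge with respect to X.  Unobserved
   causal and backdoor paths are witnessed only by the parents of their endpoints; since xk
   is a parent of neither, dropping xk from the observed set creates no such path.  Hence
   (xi, xj) is a visible non-edge with respect to X - {xk}, and F2 yields residuals that
   avoid xk. *)

lemma indep_commute:
  assumes "prob_space P" "indep P Y Z"
  shows "indep P Z Y"
proof -
  interpret prob_space P by fact
  show ?thesis using assms(2) unfolding indep_def indep_var_eq indep_sets2_eq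
    by (metis (no_types, lifting) Int_commute mult.commute)
qed

lemma dipath_last_edge:
  assumes "is_dipath E p" "2 \<le> length p"
  shows "(p ! (length p - 2), last p) \<in> E"
proof -
  have "(p ! (length p - 2), p ! Suc (length p - 2)) \<in> E"
    using assms unfolding is_dipath_def by simp
  moreover have "Suc (length p - 2) = length p - 1" "p \<noteq> []" using assms(2) by auto
  then have "last p = p ! Suc (length p - 2)" by (simp add: last_conv_nth)
  ultimately show ?thesis by simp
qed

lemma dipath_penultimate_parent:
  assumes "is_dipath E p" "2 \<le> length p"
  shows "p ! (length p - 2) \<in> parents E (last p)"
  using dipath_last_edge[OF assms] unfolding parents_def by simp

lemma UCP_superset:
  assumes "UCP E Y a b" "Y \<subseteq> X" "parents E b \<inter> X \<subseteq> Y"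
  shows "UCP E X a b"
proof -
  obtain p where p: "is_dipath E p" "hd p = a" "last p = b" "2 \<le> length p"
      "p ! (length p - 2) \<notin> Y"
    using assms(1) unfolding UCP_def by blast
  then have "p ! (length p - 2) \<notin> X"
    using dipath_penultimate_parent[OF p(1,4)] assms(3) by auto
  with p show ?thesis unfolding UCP_def by (intro exI[of _ p]) simp
qed

lemma UBP_superset:
  assumes "UBP E Y a b" "Y \<subseteq> X" "parents E a \<inter> X \<subseteq> Y" "parents E b \<inter> X \<subseteq> Y"
  shows "UBP E X a b"
proof -
  obtain p1 p2 where p: "is_dipath E p1" "is_dipath E p2" "hd p1 = hd p2"
      "last p1 = a" "last p2 = b" "2 \<le> length p1" "2 \<le> length p2"
      "distinct (rev p1 @ tl p2)"
      "p1 ! (length p1 - 2) \<notin> Y" "p2 ! (length p2 - 2) \<notin> Y"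
    using assms(1) unfolding UBP_def by blast
  have "p1 ! (length p1 - 2) \<notin> X"
    using dipath_penultimate_parent[OF p(1,6)] p(4,9) assms(3) by auto
  moreover have "p2 ! (length p2 - 2) \<notin> X"
    using dipath_penultimate_parent[OF p(2,7)] p(5,10) assms(4) by auto
  ultimately show ?thesis
    using p unfolding UBP_def by (intro exI[of _ p1] exI[of _ p2]) simp
qed

lemma invisible_superset:
  assumes "invisible E Y a b" "Y \<subseteq> X" "parents E a \<inter> X \<subseteq> Y" "parents E b \<inter> X \<subseteq> Y"
  shows "invisible E X a b"
  using assms UBP_superset UCP_superset unfolding invisible_def by metis

lemma UBP_commute:
  assumes "UBP E X a b"
  shows "UBP E X b a"
proof -
  obtain p1 p2 where p: "is_dipath E p1" "is_dipath E p2" "hd p1 = hd p2"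
      "last p1 = a" "last p2 = b" "2 \<le> length p1" "2 \<le> length p2"
      "distinct (rev p1 @ tl p2)"
      "p1 ! (length p1 - 2) \<notin> X" "p2 ! (length p2 - 2) \<notin> X"
    using assms unfolding UBP_def by blast
  obtain v t1 t2 where "p1 = v # t1" "p2 = v # t2"
    using p(3,6,7) by (cases p1; cases p2) auto
  then have "distinct (rev p2 @ tl p1)" using p(8) by auto
  with p show ?thesis unfolding UBP_def by (intro exI[of _ p2] exI[of _ p1]) simp
qed

lemma invisible_commute: "invisible E X a b \<Longrightarrow> invisible E X b a"
  unfolding invisible_def by (metis UBP_commute)

theorem proposition4:
  fixes P :: "'a measure" and X U :: "'v set" and E :: "('v \<times> 'v) set"
    and var n :: "'v \<Rightarrow> 'a \<Rightarrow> real" and f :: "'v \<Rightarrow> 'v \<Rightarrow> real \<Rightarrow> real"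
    and \<G> :: "('v \<Rightarrow> real \<Rightarrow> real) set"
    and xi xj xk :: 'v
  assumes model: "additive_model P X U E var n f"
    and CFC: "faithful P (X \<union> U) E var"
    and Gprop: "class_property P X (X \<union> U) var n \<G>"
    and F1: "\<And>X' a b. X' \<subseteq> X \<Longrightarrow> a \<in> X' \<Longrightarrow> b \<in> X' \<Longrightarrow> a \<noteq> b \<Longrightarrow>
       visible_parent E X' a b \<longleftrightarrow>
         ((\<forall>G1\<in>\<G>. \<forall>G2\<in>\<G>. \<forall>M N. M \<subseteq> X' - {a, b} \<longrightarrow> N \<subseteq> X' - {b} \<longrightarrow>
             \<not> indep P (resid var a G1 M) (resid var b G2 N)) \<and>
          (\<exists>G1\<in>\<G>. \<exists>G2\<in>\<G>. \<exists>M N. M \<subseteq> X' - {a} \<and> N \<subseteq> X' - {a, b} \<and>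
             indep P (resid var a G1 M) (resid var b G2 N)))"
    and F2: "\<And>X' a b. X' \<subseteq> X \<Longrightarrow> a \<in> X' \<Longrightarrow> b \<in> X' \<Longrightarrow> a \<noteq> b \<Longrightarrow>
       visible_nonedge E X' a b \<longleftrightarrow>
         (\<exists>G1\<in>\<G>. \<exists>G2\<in>\<G>. \<exists>M N. M \<subseteq> X' - {a, b} \<and> N \<subseteq> X' - {a, b} \<and>
             indep P (resid var a G1 M) (resid var b G2 N))"
    and F3: "\<And>X' a b. X' \<subseteq> X \<Longrightarrow> a \<in> X' \<Longrightarrow> b \<in> X' \<Longrightarrow> a \<noteq> b \<Longrightarrow>
       invisible E X' a b \<longleftrightarrow>
         (\<forall>G1\<in>\<G>. \<forall>G2\<in>\<G>. \<forall>M N. M \<subseteq> X' - {a} \<longrightarrow> N \<subseteq> X' - {b} \<longrightarrow>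
             \<not> indep P (resid var a G1 M) (resid var b G2 N))"
    and dist: "xi \<in> X" "xj \<in> X" "xk \<in> X" "xi \<noteq> xj" "xi \<noteq> xk" "xj \<noteq> xk"
    and not_par: "xk \<notin> parents E xi" "xk \<notin> parents E xj"
    and hyp: "\<exists>G1\<in>\<G>. \<exists>G2\<in>\<G>. \<exists>M N. M \<subseteq> X - {xi, xj, xk} \<and> N \<subseteq> X - {xi, xj} \<and>
               indep P (resid var xi G1 (M \<union> {xk})) (resid var xj G2 N)"
  shows "\<exists>G1'\<in>\<G>. \<exists>G2'\<in>\<G>. \<exists>M' N'. M' \<subseteq> X - {xi, xj, xk} \<and> N' \<subseteq> X - {xi, xj} \<and>
           indep P (resid var xi G1' M') (resid var xj G2' N')"
proof -
  obtain G1 G2 M N where G: "G1 \<in> \<G>" "G2 \<in> \<G>"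
      and M: "M \<subseteq> X - {xi, xj, xk}" and N: "N \<subseteq> X - {xi, xj}"
      and ind: "indep P (resid var xi G1 (M \<union> {xk})) (resid var xj G2 N)"
    using hyp by blast
  have ind': "indep P (resid var xj G2 N) (resid var xi G1 (M \<union> {xk}))"
    using indep_commute[OF _ ind] model unfolding additive_model_def by blast
  have Mk: "M \<union> {xk} \<subseteq> X - {xi, xj}" "M \<union> {xk} \<subseteq> X - {xi}" using M dist by auto
  have Nj: "N \<subseteq> X - {xj}" "N \<subseteq> X - {xj, xi}" using N by auto
  have visible: "\<not> invisible E X xi xj"
  proof
    assume "invisible E X xi xj"
    then have "\<forall>M N. M \<subseteq> X - {xi} \<longrightarrow> N \<subseteq> X - {xj} \<longrightarrow>
        \<not> indep P (resid var xi G1 M) (resid var xj G2 N)"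
      using F3[of X xi xj] dist G by blast
    then show False using Mk Nj ind by blast
  qed
  have "(xj, xi) \<notin> E"
  proof
    assume "(xj, xi) \<in> E"
    then have "visible_parent E X xi xj"
      using visible unfolding visible_parent_def parents_def by simp
    then have "\<forall>M N. M \<subseteq> X - {xi, xj} \<longrightarrow> N \<subseteq> X - {xj} \<longrightarrow>
        \<not> indep P (resid var xi G1 M) (resid var xj G2 N)"
      using F1[of X xi xj] dist G by blast
    then show False using Mk Nj ind by blast
  qed
  moreover have "(xi, xj) \<notin> E"
  proof
    assume "(xi, xj) \<in> E"
    then have "visible_parent E X xj xi"
      using visible invisible_commute unfolding visible_parent_def parents_def by fastforce
    then have "\<forall>N M. N \<subseteq> X - {xj, xi} \<longrightarrow> M \<subseteq> X - {xi} \<longrightarrow>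
        \<not> indep P (resid var xj G2 N) (resid var xi G1 M)"
      using F1[of X xj xi] dist G by blast
    then show False using Mk Nj ind' by blast
  qed
  moreover have "\<not> invisible E (X - {xk}) xi xj"
    using invisible_superset[of E "X - {xk}" xi xj X] visible not_par by blast
  ultimately have "visible_nonedge E (X - {xk}) xi xj"
    unfolding visible_nonedge_def by blast
  then obtain G1' G2' M' N' where "G1' \<in> \<G>" "G2' \<in> \<G>"
      "M' \<subseteq> X - {xk} - {xi, xj}" "N' \<subseteq> X - {xk} - {xi, xj}"
      "indep P (resid var xi G1' M') (resid var xj G2' N')"
    using F2[of "X - {xk}" xi xj] dist by auto
  then show ?thesis by blast
qed

end
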